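(* Let $\mathcal{A}$ be a finite set and $n\ge1$. Let $0<w_1\le w_2\le\dots\le w_n$, let $\eta_1,\dots,\eta_n>0$, let $a_1,\dots,a_n\in\mathcal{A}$, let $\hat\ell_1,\dots,\hat\ell_n:\mathcal{A}\to[0,\infty)$, and for each $i\in[n]$ let $\mathcal{M}_i\subseteq[i-1]$. Define $$\hat L_i(a)=\sum_{j\in[i-1]\setminus\mathcal{M}_i}w_j\hat\ell_j(a),\qquad \tilde L_{i+1}(a)=\sum_{j\in[i]}w_j\hat\ell_j(a),$$ and the distributions $\hat\pi_i(a)\propto\exp\big(-(\eta_i/w_i)\hat L_i(a)\big)$, $\tilde\pi_{i+1}(a)\propto\exp\big(-(\eta_i/w_i)\tilde L_{i+1}(a)\big)$ on $\mathcal{A}$. Assume $\hat\ell_i(a_i)\hat\pi_i(a_i)\le1$ for all $i\in[n]$. Then $$\sum_{i=1}^n w_i\,\hat\ell_i(a_i)\big[\hat\pi_i(a_i)-\tilde\pi_{i+1}(a_i)\big]\le\sum_{j=1}^n\sum_{a\in\mathcal{A}}\hat\ell_j(a)\Big(\eta_jw_j+\sum_{i\in[n]:\,j\in\mathcal{M}_i}\eta_iw_i\,\mathbb{I}\{a_i=a\}\Big).$$ *)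

theory Defs
  imports "HOL-Analysis.Analysis"
begin

definition gibbs :: "'a set \<Rightarrow> real \<Rightarrow> ('a \<Rightarrow> real) \<Rightarrow> 'a \<Rightarrow> real" where
  "gibbs A c L a = exp (- c * L a) / (\<Sum>b\<in>A. exp (- c * L b))"

definition Lhat :: "(nat \<Rightarrow> real) \<Rightarrow> (nat \<Rightarrow> 'a \<Rightarrow> real) \<Rightarrow> (nat \<Rightarrow> nat set) \<Rightarrow> nat \<Rightarrow> 'a \<Rightarrow> real" where
  "Lhat w l M i a = (\<Sum>j\<in>{1..<i} - M i. w j * l j a)"

definition Ltilde :: "(nat \<Rightarrow> real) \<Rightarrow> (nat \<Rightarrow> 'a \<Rightarrow> real) \<Rightarrow> nat \<Rightarrow> 'a \<Rightarrow> real" where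
  "Ltilde w l i a = (\<Sum>j\<in>{1..i}. w j * l j a)"

end

theory Submission
  imports Defs
begin

text \<open>The bound holds round by round.  From \<open>Lhat\<^sub>i\<close> to \<open>Ltilde\<^sub>(\<^sub>i\<^sub>+\<^sub>1\<^sub>)\<close> the cumulative
  loss grows by \<open>D = w\<^sub>i l\<^sub>i + \<Sum>\<^sub>j\<^sub>\<in>\<^sub>M\<^sub>i w\<^sub>j l\<^sub>j \<ge> 0\<close>, and raising the loss by \<open>D\<close> shrinks
  the normaliser, so a Gibbs probability \<open>p\<close> drops by at most \<open>p (1 - exp (-c D)) \<le> p c D\<close>.
  With \<open>c = \<eta>\<^sub>i / w\<^sub>i\<close> and \<open>l\<^sub>i(a\<^sub>i) p \<le> 1\<close> the \<open>i\<close>-th term is at most \<open>\<eta>\<^sub>i D(a\<^sub>i)\<close>;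
  monotone weights bound \<open>w\<^sub>j \<le> w\<^sub>i\<close> for the missing rounds, and regrouping the
  missing losses by the round \<open>j\<close> they belong to gives the right-hand side.\<close>

lemma mono_of_step_mono:
  fixes f :: "nat \<Rightarrow> 'b::preorder"
  assumes step_mono: "\<And>k. a \<le> k \<Longrightarrow> k < b \<Longrightarrow> f k \<le> f (k + 1)"
    and "a \<le> j" "j \<le> i" "i \<le> b"
  shows "f j \<le> f i"
  using \<open>j \<le> i\<close> \<open>i \<le> b\<close>
proof (induction i rule: dec_induct)
  case (step k)
  then show ?case using step_mono[of k] \<open>a \<le> j\<close> by (auto intro: order_trans)
qed simp

lemma gibbs_nonneg: "0 \<le> gibbs A c L x"
  unfolding gibbs_def by (simp add: sum_nonneg)

lemma gibbs_diff_le: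
  assumes "finite A" "x \<in> A" "c \<ge> 0" and LL': "\<And>b. b \<in> A \<Longrightarrow> L b \<le> L' b"
  shows "gibbs A c L x - gibbs A c L' x \<le> gibbs A c L x * (c * (L' x - L x))"
proof -
  define Z where "Z = (\<Sum>b\<in>A. exp (- c * L b))"
  define Z' where "Z' = (\<Sum>b\<in>A. exp (- c * L' b))"
  have "Z' > 0" unfolding Z'_def using assms(1,2) by (intro sum_pos) auto
  have "Z' \<le> Z"
    unfolding Z'_def Z_def using LL' \<open>c \<ge> 0\<close> by (intro sum_mono) (simp add: mult_left_mono)
  have "gibbs A c L x * exp (- c * (L' x - L x)) = exp (- c * L' x) / Z"
    unfolding gibbs_def Z_def by (simp add: exp_add[symmetric] algebra_simps)
  also have "\<dots> \<le> gibbs A c L' x"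
    unfolding gibbs_def Z'_def[symmetric] using \<open>Z' > 0\<close> \<open>Z' \<le> Z\<close>
    by (intro divide_left_mono) auto
  finally have "gibbs A c L x - gibbs A c L' x \<le> gibbs A c L x * (1 - exp (- c * (L' x - L x)))"
    by (simp add: algebra_simps)
  also have "\<dots> \<le> gibbs A c L x * (c * (L' x - L x))"
    using exp_ge_add_one_self[of "- c * (L' x - L x)"]
    by (intro mult_left_mono gibbs_nonneg) auto
  finally show ?thesis .
qed

lemma weighted_gibbs_diff_le:
  assumes "finite A" "x \<in> A" "w > 0" "eta \<ge> 0" "\<And>b. b \<in> A \<Longrightarrow> L b \<le> L' b"
    and "s \<ge> 0" "s * gibbs A (eta / w) L x \<le> 1"
  shows "w * s * (gibbs A (eta / w) L x - gibbs A (eta / w) L' x) \<le> eta * (L' x - L x)"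
proof -
  let ?p = "gibbs A (eta / w) L x"
  have "w * s * (?p - gibbs A (eta / w) L' x) \<le> w * s * (?p * (eta / w * (L' x - L x)))"
    using assms by (intro mult_left_mono gibbs_diff_le) auto
  also have "\<dots> = eta * (L' x - L x) * (s * ?p)"
    using \<open>w > 0\<close> by (simp add: field_simps)
  also have "\<dots> \<le> eta * (L' x - L x)"
    using assms by (intro mult_left_le) auto
  finally show ?thesis .
qed

lemma Ltilde_eq_Lhat_add:
  assumes "M i \<subseteq> {1..<i}" "1 \<le> i"
  shows "Ltilde w l i a = Lhat w l M i a + w i * l i a + (\<Sum>j\<in>M i. w j * l j a)"
proof -
  have "{1..i} = insert i {1..<i}" using \<open>1 \<le> i\<close> by auto
  then show ?thesis
    unfolding Ltilde_def Lhat_def using sum.subset_diff[OF assms(1), of "\<lambda>j. w j * l j a"]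
    by simp
qed

lemma sum_indicator_regroup:
  fixes l :: "'i \<Rightarrow> 'a \<Rightarrow> real" and c :: "'i \<Rightarrow> real"
  assumes "finite I" "finite A" "\<And>i. i \<in> I \<Longrightarrow> M i \<subseteq> I" "\<And>i. i \<in> I \<Longrightarrow> act i \<in> A"
  shows "(\<Sum>j\<in>I. \<Sum>a\<in>A. l j a * (\<Sum>i\<in>{i\<in>I. j \<in> M i}. c i * (if act i = a then 1 else 0)))
       = (\<Sum>i\<in>I. \<Sum>j\<in>M i. c i * l j (act i))"
proof -
  have "(\<Sum>a\<in>A. l j a * (\<Sum>i\<in>{i\<in>I. j \<in> M i}. c i * (if act i = a then 1 else 0)))
      = (\<Sum>i\<in>{i\<in>I. j \<in> M i}. c i * l j (act i))" for j
  proof -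
    have "(\<Sum>a\<in>A. l j a * (\<Sum>i\<in>{i\<in>I. j \<in> M i}. c i * (if act i = a then 1 else 0)))
        = (\<Sum>a\<in>A. \<Sum>i\<in>{i\<in>I. j \<in> M i}. c i * (if act i = a then l j a else 0))"
      unfolding sum_distrib_left by (intro sum.cong refl) simp
    also have "\<dots> = (\<Sum>i\<in>{i\<in>I. j \<in> M i}. \<Sum>a\<in>A. c i * (if act i = a then l j a else 0))"
      by (rule sum.swap)
    also have "\<dots> = (\<Sum>i\<in>{i\<in>I. j \<in> M i}. c i * l j (act i))"
      using assms(2,4) by (intro sum.cong) (auto simp: sum_distrib_left[symmetric] sum.delta)
    finally show ?thesis .
  qed
  then have "(\<Sum>j\<in>I. \<Sum>a\<in>A. l j a * (\<Sum>i\<in>{i\<in>I. j \<in> M i}. c i * (if act i = a then 1 else 0)))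
      = (\<Sum>j\<in>I. \<Sum>i\<in>{i\<in>I. j \<in> M i}. c i * l j (act i))"
    by simp
  also have "\<dots> = (\<Sum>i\<in>I. \<Sum>j\<in>{j\<in>I. j \<in> M i}. c i * l j (act i))"
    by (rule sum.swap_restrict) (use assms(1) in auto)
  also have "\<dots> = (\<Sum>i\<in>I. \<Sum>j\<in>M i. c i * l j (act i))"
    using assms(3) by (intro sum.cong refl arg_cong2[where f = sum]) auto
  finally show ?thesis .
qed

lemma round_term_le:
  assumes "finite A" "x \<in> A" "1 \<le> i" "M i \<subseteq> {1..<i}" "eta \<ge> 0" "w i > 0"
    and w_le: "\<And>j. j \<in> M i \<Longrightarrow> 0 \<le> w j \<and> w j \<le> w i"
    and l_nonneg: "\<And>j a. j \<in> insert i (M i) \<Longrightarrow> a \<in> A \<Longrightarrow> 0 \<le> l j a"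
    and "l i x * gibbs A (eta / w i) (Lhat w l M i) x \<le> 1"
  shows "w i * l i x * (gibbs A (eta / w i) (Lhat w l M i) x - gibbs A (eta / w i) (Ltilde w l i) x)
    \<le> eta * w i * (\<Sum>a\<in>A. l i a) + (\<Sum>j\<in>M i. eta * w i * l j x)"
proof -
  have increment: "Ltilde w l i a - Lhat w l M i a = w i * l i a + (\<Sum>j\<in>M i. w j * l j a)" for a
    using assms(3,4) by (simp add: Ltilde_eq_Lhat_add)
  have "Lhat w l M i a \<le> Ltilde w l i a" if "a \<in> A" for a
  proof -
    have "0 \<le> w i * l i a + (\<Sum>j\<in>M i. w j * l j a)"
      using \<open>w i > 0\<close> w_le l_nonneg[OF _ that] by (auto intro!: add_nonneg_nonneg sum_nonneg)
    then show ?thesis using increment[of a] by simp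
  qed
  then have "w i * l i x * (gibbs A (eta / w i) (Lhat w l M i) x - gibbs A (eta / w i) (Ltilde w l i) x)
      \<le> eta * (w i * l i x + (\<Sum>j\<in>M i. w j * l j x))"
    unfolding increment[symmetric] using assms l_nonneg[of i x]
    by (intro weighted_gibbs_diff_le) auto
  also have "\<dots> \<le> eta * (w i * (\<Sum>a\<in>A. l i a) + (\<Sum>j\<in>M i. w i * l j x))"
  proof -
    have "w i * l i x \<le> w i * (\<Sum>a\<in>A. l i a)"
      using assms l_nonneg by (intro mult_left_mono member_le_sum) auto
    moreover have "w j * l j x \<le> w i * l j x" if "j \<in> M i" for j
      using that w_le l_nonneg \<open>x \<in> A\<close> by (intro mult_right_mono) auto
    ultimately have "w i * l i x + (\<Sum>j\<in>M i. w j * l j x)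
        \<le> w i * (\<Sum>a\<in>A. l i a) + (\<Sum>j\<in>M i. w i * l j x)"
      by (intro add_mono sum_mono)
    then show ?thesis
      using \<open>eta \<ge> 0\<close> by (rule mult_left_mono)
  qed
  finally show ?thesis
    by (simp add: algebra_simps sum_distrib_left)
qed

theorem mainTheorem4:
  fixes A :: "'a set" and n :: nat and w eta :: "nat \<Rightarrow> real"
    and act :: "nat \<Rightarrow> 'a" and l :: "nat \<Rightarrow> 'a \<Rightarrow> real" and M :: "nat \<Rightarrow> nat set"
  assumes "finite A" and "n \<ge> 1"
    and "0 < w 1" and "\<And>i. 1 \<le> i \<Longrightarrow> i < n \<Longrightarrow> w i \<le> w (i + 1)"
    and "\<And>i. 1 \<le> i \<Longrightarrow> i \<le> n \<Longrightarrow> eta i > 0"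
    and "\<And>i. 1 \<le> i \<Longrightarrow> i \<le> n \<Longrightarrow> act i \<in> A"
    and "\<And>i a. 1 \<le> i \<Longrightarrow> i \<le> n \<Longrightarrow> a \<in> A \<Longrightarrow> l i a \<ge> 0"
    and "\<And>i. 1 \<le> i \<Longrightarrow> i \<le> n \<Longrightarrow> M i \<subseteq> {1..<i}"
    and "\<And>i. 1 \<le> i \<Longrightarrow> i \<le> n \<Longrightarrow>
           l i (act i) * gibbs A (eta i / w i) (Lhat w l M i) (act i) \<le> 1"
  shows "(\<Sum>i=1..n. w i * l i (act i) *
            (gibbs A (eta i / w i) (Lhat w l M i) (act i)
             - gibbs A (eta i / w i) (Ltilde w l i) (act i)))
         \<le> (\<Sum>j=1..n. \<Sum>a\<in>A. l j a *
              (eta j * w j + (\<Sum>i\<in>{i\<in>{1..n}. j \<in> M i}. eta i * w i * (if act i = a then 1 else 0))))"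
proof -
  have w_mono: "w j \<le> w i" if "1 \<le> j" "j \<le> i" "i \<le> n" for i j
    using mono_of_step_mono[of 1 n w j i] assms(4) that by simp
  have w_pos: "0 < w i" if "1 \<le> i" "i \<le> n" for i
    using w_mono[of 1 i] that assms(3) by simp
  have "(\<Sum>i=1..n. w i * l i (act i) *
            (gibbs A (eta i / w i) (Lhat w l M i) (act i)
             - gibbs A (eta i / w i) (Ltilde w l i) (act i)))
      \<le> (\<Sum>i=1..n. eta i * w i * (\<Sum>a\<in>A. l i a) + (\<Sum>j\<in>M i. eta i * w i * l j (act i)))"
  proof (rule sum_mono)
    fix i assume i: "i \<in> {1..n}"
    with assms(8) have "M i \<subseteq> {1..<i}" by simp
    with i show "w i * l i (act i) *
            (gibbs A (eta i / w i) (Lhat w l M i) (act i)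
             - gibbs A (eta i / w i) (Ltilde w l i) (act i))
        \<le> eta i * w i * (\<Sum>a\<in>A. l i a) + (\<Sum>j\<in>M i. eta i * w i * l j (act i))"
      using assms(1,5-7,9) w_mono w_pos
      by (intro round_term_le) (auto simp: less_imp_le subset_iff)
  qed
  also have "\<dots> = (\<Sum>j=1..n. \<Sum>a\<in>A. l j a *
              (eta j * w j + (\<Sum>i\<in>{i\<in>{1..n}. j \<in> M i}. eta i * w i * (if act i = a then 1 else 0))))"
    using sum_indicator_regroup[of "{1..n}" A M act l "\<lambda>i. eta i * w i"] assms(1,6,8)
    by (force simp: sum.distrib distrib_left sum_distrib_left mult_ac)
  finally show ?thesis .
qed

end
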